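(* Let $(X,+,d)$ be a complete, locally compact Abelian metric group with translation-invariant metric $d$ such that every non-empty open ball in $X$ contains infinitely many elements. Let $A\in K(X)$. Then the spectre operator $S:K(X)\to K(X)$ is continuous at $A$ (with respect to the Pompeiu–Hausdorff metric) if and only if $S(A)=\{0\}$.
   Context: $d$ satisfies $d(x,y)=d(x+z,y+z)$ for all $x,y,z\in X$; $0$ is the neutral element. $K(X)$ is the family of non-empty compact subsets of $X$ with the Pompeiu–Hausdorff metric $d_H(A,B)=\max\{\sup_{a\in A}d(a,B),\sup_{b\in B}d(A,b)\}$. The spectre of $A\subset X$ is $S(A):=\{z\in X:\ \forall_{a\in A}\ (a+z\in A \text{ or } a-z\in A)\}$; it is compact for compact non-empty $A$. *)

theory Defs
  imports "HOL-Analysis.Analysis"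
begin

definition hausdorff_dist :: "'a::metric_space set \<Rightarrow> 'a set \<Rightarrow> real" where
  "hausdorff_dist A B = max (SUP a\<in>A. infdist a B) (SUP b\<in>B. infdist b A)"

definition spectre :: "'a::ab_group_add set \<Rightarrow> 'a set" where
  "spectre A = {z. \<forall>a\<in>A. a + z \<in> A \<or> a - z \<in> A}"

definition Kfam :: "'a::topological_space set set" where
  "Kfam = {A. A \<noteq> {} \<and> compact A}"

end

theory Submission
  imports Defs
begin

text \<open>
  If \<open>S(A) = {0}\<close>, each \<open>z \<noteq> 0\<close> in the compact difference set \<open>A - A\<close> has a witness
  \<open>a \<in> A\<close> with \<open>a \<plusminus> z \<notin> A\<close>, and such a witness survives small perturbations of \<open>z\<close> and
  of \<open>A\<close>; compactness makes this uniform outside a ball around \<open>0\<close>, while \<open>S(B)\<close> lies close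
  to \<open>A - A\<close> whenever \<open>B\<close> is close to \<open>A\<close>. Hence \<open>S(B)\<close> stays in a small ball around \<open>0\<close>.
  Conversely, since balls are infinite, \<open>A\<close> is a Hausdorff limit of finite sets without
  non-trivial additive relations \<open>a + d = b + c\<close>; the spectre of such a set with at least four
  points is \<open>{0}\<close>, so continuity at \<open>A\<close> rules out any \<open>z \<noteq> 0\<close> in \<open>S(A)\<close>.
\<close>

lemma hausdorff_dist_commute: "hausdorff_dist A B = hausdorff_dist B A"
  by (simp add: hausdorff_dist_def max.commute)

lemma bdd_above_infdist_image:
  fixes A B :: "'a::metric_space set"
  assumes "bounded A" "B \<noteq> {}"
  shows "bdd_above ((\<lambda>a. infdist a B) ` A)"
proof -
  obtain b where b: "b \<in> B" using assms(2) by blast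
  obtain e where e: "\<And>a. a \<in> A \<Longrightarrow> dist b a \<le> e"
    using bounded_any_center[of A b] assms(1) by blast
  have "infdist a B \<le> e" if "a \<in> A" for a
    using infdist_le[OF b, of a] e[OF that] by (simp add: dist_commute)
  then show ?thesis by (rule bdd_aboveI2)
qed

lemma infdist_le_hausdorff_dist:
  fixes A B :: "'a::metric_space set"
  assumes "bounded A" "B \<noteq> {}" "a \<in> A"
  shows "infdist a B \<le> hausdorff_dist A B"
proof -
  have "infdist a B \<le> (SUP a\<in>A. infdist a B)"
    using bdd_above_infdist_image[OF assms(1,2)] assms(3) by (rule cSUP_upper2) simp
  then show ?thesis unfolding hausdorff_dist_def by linarith
qed

lemma hausdorff_dist_lessE:
  fixes A B :: "'a::metric_space set"
  assumes "bounded A" "B \<noteq> {}" "hausdorff_dist A B < d" "a \<in> A"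
  obtains b where "b \<in> B" "dist a b < d"
proof -
  have "(INF b\<in>B. dist a b) < d"
    using infdist_le_hausdorff_dist[OF assms(1,2,4)] assms(2,3) by (simp add: infdist_notempty)
  then show ?thesis using that by (subst (asm) cInf_less_iff) (auto simp: assms(2))
qed

lemma hausdorff_dist_le_rel_set:
  fixes A B :: "'a::metric_space set"
  assumes "rel_set (\<lambda>a b. dist a b \<le> d) A B" "A \<noteq> {}"
  shows "hausdorff_dist A B \<le> d"
proof -
  have "B \<noteq> {}" using assms by (auto simp: rel_set_def)
  then show ?thesis
    using assms unfolding hausdorff_dist_def rel_set_def
    by (auto intro!: cSUP_least intro: infdist_le2 simp: dist_commute)
qed

definition hausdorff_continuous_at ::
    "('a::metric_space set \<Rightarrow> 'b::metric_space set) \<Rightarrow> 'a set \<Rightarrow> bool" where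
  "hausdorff_continuous_at F A \<longleftrightarrow>
     (\<forall>\<epsilon>>0. \<exists>\<delta>>0. \<forall>B\<in>Kfam. hausdorff_dist A B < \<delta> \<longrightarrow> hausdorff_dist (F A) (F B) < \<epsilon>)"

lemma zero_in_spectre [simp]: "0 \<in> spectre A"
  by (simp add: spectre_def)

lemma spectre_subset_differences:
  assumes "A \<noteq> {}"
  shows "spectre A \<subseteq> {a - b | a b. a \<in> A \<and> b \<in> A}"
proof
  fix z assume z: "z \<in> spectre A"
  obtain a where a: "a \<in> A" using assms by blast
  then have "a + z \<in> A \<or> a - z \<in> A" using z by (simp add: spectre_def)
  then show "z \<in> {a - b | a b. a \<in> A \<and> b \<in> A}"
  proof
    assume "a + z \<in> A" then show ?thesis using a by (intro CollectI exI[of _ "a + z"] exI[of _ a]) simp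
  next
    assume "a - z \<in> A" then show ?thesis using a by (intro CollectI exI[of _ a] exI[of _ "a - z"]) simp
  qed
qed

text \<open>
  Midpoint relations \<open>a + a = b + c\<close> are allowed: a point \<open>x\<close> added to \<open>B\<close> can only be
  chosen to avoid the relations in which it occurs once, i.e.\ \<open>x \<noteq> b + c - a\<close>.
\<close>
definition weak_sidon :: "'a::ab_group_add set \<Rightarrow> bool" where
  "weak_sidon B \<longleftrightarrow>
     (\<forall>a\<in>B. \<forall>b\<in>B. \<forall>c\<in>B. \<forall>d\<in>B. a + d = b + c \<longrightarrow> a = b \<or> a = c \<or> a = d \<or> b = c)"

lemma weak_sidon_empty [simp]: "weak_sidon {}"
  by (simp add: weak_sidon_def)

lemma weak_sidon_insert:
  assumes "weak_sidon B" "x \<notin> B" "x \<notin> (\<lambda>(a, b, c). b + c - a) ` (B \<times> B \<times> B)"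
  shows "weak_sidon (insert x B)"
proof -
  have new: "a + x \<noteq> b + c \<and> x + a \<noteq> b + c \<and> b + c \<noteq> a + x \<and> b + c \<noteq> x + a"
    if "a \<in> B" "b \<in> B" "c \<in> B" for a b c
  proof -
    have "x \<noteq> b + c - a" using assms(3) that by force
    then show ?thesis by (metis add.commute add_diff_cancel_left')
  qed
  show ?thesis
    unfolding weak_sidon_def
  proof (intro ballI impI)
    fix a b c d assume "a \<in> insert x B" "b \<in> insert x B" "c \<in> insert x B" "d \<in> insert x B"
      and "a + d = b + c"
    then show "a = b \<or> a = c \<or> a = d \<or> b = c"
      using assms(1) new unfolding weak_sidon_def
      by (cases "a = x"; cases "b = x"; cases "c = x"; cases "d = x"; auto)
  qed
qed

lemma weak_sidon_partners_meet:
  fixes w :: "'a::ab_group_add"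
  assumes "weak_sidon B" "w \<noteq> 0" "p \<in> B" "q \<in> B" "p' \<in> B" "q' \<in> B" "p \<noteq> p'"
    and "q = p + w \<or> q = p - w" "q' = p' + w \<or> q' = p' - w"
  shows "p = q' \<or> q = p' \<or> q = q'"
proof -
  have "q \<noteq> p" using assms(2,8) by auto
  moreover have "p + q' = q + p' \<or> q + q' = p + p'"
    using assms(8,9) by (auto simp: algebra_simps)
  ultimately show ?thesis
    using assms(1,3-7) unfolding weak_sidon_def by metis
qed

text \<open>
  For \<open>w \<in> S(B) - {0}\<close> the pairs \<open>{p, p \<plusminus> w}\<close> pairwise meet, which confines \<open>B\<close> to
  three points.
\<close>
lemma spectre_weak_sidon:
  fixes B :: "'a::ab_group_add set"
  assumes sidon: "weak_sidon B" and card: "4 \<le> card B"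
  shows "spectre B = {0}"
proof (rule ccontr)
  assume "spectre B \<noteq> {0}"
  then obtain w where w: "w \<in> spectre B" "w \<noteq> 0" using zero_in_spectre by blast
  have "\<forall>p\<in>B. \<exists>q. q \<in> B \<and> (q = p + w \<or> q = p - w)"
    using w(1) by (auto simp: spectre_def)
  then obtain q where q: "\<And>p. p \<in> B \<Longrightarrow> q p \<in> B \<and> (q p = p + w \<or> q p = p - w)"
    by (metis bchoice)
  have meet: "p = q p' \<or> q p = p' \<or> q p = q p'" if "p \<in> B" "p' \<in> B" "p \<noteq> p'" for p p'
    using weak_sidon_partners_meet[OF sidon w(2) that(1) _ that(2) _ that(3)] q that by blast
  have fin: "finite B" using card by (simp add: card_ge_0_finite)
  obtain p1 where p1: "p1 \<in> B" using card by fastforce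
  let ?E = "{p1, q p1}"
  have "card ?E \<le> 2" by (simp add: card_insert_le_m1)
  moreover have "card (B - ?E) = card B - card ?E"
    using q[OF p1] p1 fin by (simp add: card_Diff_subset)
  ultimately have "2 \<le> card (B - ?E)" using card by linarith
  then obtain p p' where pp': "p \<in> B - ?E" "p' \<in> B - ?E" "p \<noteq> p'"
    using fin by (metis card_le_Suc0_iff_eq finite_Diff not_less_eq_eq numeral_2_eq_2)
  have "q p \<in> ?E" "q p' \<in> ?E"
    using meet[of p p1] meet[of p' p1] pp' p1 by auto
  moreover have "q p = q p'" using meet[of p p'] pp' calculation by auto
  ultimately have "p \<in> {q p + w, q p - w}" "p' \<in> {q p + w, q p - w}"
    using q[of p] q[of p'] pp' by (auto simp: algebra_simps)
  then have "{p, p'} = {q p + w, q p - w}"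
    using pp'(3) by auto
  moreover have "\<exists>e\<in>?E. e = q p + w \<or> e = q p - w"
    using q[OF p1] \<open>q p \<in> ?E\<close> by (auto simp: algebra_simps)
  ultimately show False using pp' by auto
qed

lemma weak_sidon_list_approximation:
  fixes cs :: "'a::{metric_space, ab_group_add} list"
  assumes balls_infinite: "\<And>(x :: 'a) r. r > 0 \<Longrightarrow> infinite (ball x r)" and "r > 0"
  shows "\<exists>bs. list_all2 (\<lambda>c b. dist c b < r) cs bs \<and> distinct bs \<and> weak_sidon (set bs)"
proof (induction cs)
  case Nil
  show ?case by simp
next
  case (Cons c cs)
  then obtain bs where bs: "list_all2 (\<lambda>c b. dist c b < r) cs bs" "distinct bs" "weak_sidon (set bs)"
    by blast
  let ?B = "set bs"
  have "finite (?B \<union> (\<lambda>(a, b, c). b + c - a) ` (?B \<times> ?B \<times> ?B))" by simp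
  then obtain x where "x \<in> ball c r" "x \<notin> ?B \<union> (\<lambda>(a, b, c). b + c - a) ` (?B \<times> ?B \<times> ?B)"
    using balls_infinite[OF \<open>r > 0\<close>, of c] by (meson finite_subset subsetI)
  then show ?case
    using bs by (intro exI[of _ "x # bs"]) (simp add: weak_sidon_insert)
qed

lemma weak_sidon_approximation:
  fixes A :: "'a::{metric_space, ab_group_add} set"
  assumes balls_infinite: "\<And>(x :: 'a) r. r > 0 \<Longrightarrow> infinite (ball x r)"
    and A: "A \<in> Kfam" and "r > 0"
  obtains B where "B \<in> Kfam" "weak_sidon B" "4 \<le> card B" "hausdorff_dist A B < r"
proof -
  have "compact A" "A \<noteq> {}" using A by (auto simp: Kfam_def)
  then obtain a0 where a0: "a0 \<in> A" by blast
  have "r/3 > 0" using \<open>r > 0\<close> by simp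
  then obtain P where P: "finite P" "P \<subseteq> A" "A \<subseteq> (\<Union>p\<in>P. ball p (r/3))"
    using seq_compact_imp_totally_bounded[OF compact_imp_seq_compact[OF \<open>compact A\<close>], rule_format]
    by metis
  obtain ps where ps: "set ps = insert a0 P" using finite_list[of "insert a0 P"] P(1) by blast
  \<comment> \<open>four copies of \<open>a0\<close> force \<open>4 \<le> card B\<close>, since every list entry gets its own point of \<open>B\<close>\<close>
  define cs where "cs = replicate 4 a0 @ ps"
  have cs: "set cs = insert a0 P" "4 \<le> length cs" by (auto simp: cs_def ps)
  have net: "rel_set (\<lambda>a c. dist a c < r/3) A (set cs)"
    unfolding rel_set_def
  proof (intro conjI ballI)
    fix a assume "a \<in> A"
    then obtain p where "p \<in> P" "dist p a < r/3" using P(3) by auto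
    then show "\<exists>c\<in>set cs. dist a c < r/3" using cs(1) by (auto simp: dist_commute)
  next
    fix c assume "c \<in> set cs"
    then show "\<exists>a\<in>A. dist a c < r/3" using cs(1) a0 P(2) \<open>r/3 > 0\<close> by (intro bexI[of _ c]) auto
  qed
  obtain bs where bs: "list_all2 (\<lambda>c b. dist c b < r/3) cs bs" "distinct bs" "weak_sidon (set bs)"
    using weak_sidon_list_approximation[OF balls_infinite \<open>r/3 > 0\<close>] by blast
  have near: "rel_set (\<lambda>c b. dist c b < r/3) (set cs) (set bs)"
    using bs(1) by (rule rel_funD[OF list.set_transfer])
  have triangle: "((\<lambda>a c. dist a c < r/3) OO (\<lambda>c b. dist c b < r/3)) \<le> (\<lambda>a b. dist a b \<le> 2*r/3)"
  proof (intro predicate2I)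
    fix a b assume "((\<lambda>a c. dist a c < r/3) OO (\<lambda>c b. dist c b < r/3)) a b"
    then obtain c where "dist a c < r/3" "dist c b < r/3" by blast
    then show "dist a b \<le> 2*r/3" using dist_triangle[of a b c] by linarith
  qed
  have "rel_set ((\<lambda>a c. dist a c < r/3) OO (\<lambda>c b. dist c b < r/3)) A (set bs)"
    unfolding rel_set_OO[symmetric] using net near by blast
  then have "rel_set (\<lambda>a b. dist a b \<le> 2*r/3) A (set bs)"
    by (rule rel_set_mono[OF triangle, THEN predicate2D])
  then have close: "hausdorff_dist A (set bs) \<le> 2*r/3"
    using \<open>A \<noteq> {}\<close> by (rule hausdorff_dist_le_rel_set)
  have len: "length cs = length bs" using bs(1) by (rule list_all2_lengthD)
  show ?thesis
  proof (rule that)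
    show "set bs \<in> Kfam" using cs(2) len by (auto simp: Kfam_def finite_imp_compact)
    show "weak_sidon (set bs)" by (fact bs(3))
    show "4 \<le> card (set bs)" using cs(2) len bs(2) by (simp add: distinct_card)
    show "hausdorff_dist A (set bs) < r" using close \<open>r > 0\<close> by linarith
  qed
qed

locale translation_invariant_dist =
  assumes dist_add_right: "\<And>x y z :: 'a::{metric_space, ab_group_add}. dist x y = dist (x + z) (y + z)"
begin

lemma dist_minus: "dist (- x) (- y) = dist x (y :: 'a)"
  using dist_add_right[of "- x" "- y" "x + y"] by (simp add: dist_commute algebra_simps)

lemma dist_add_le: "dist (a + b) (a' + b') \<le> dist a a' + dist b (b' :: 'a)"
  using dist_triangle[of "a + b" "a' + b'" "a' + b"] dist_add_right[of a a' b]
    dist_add_right[of b b' a'] by (simp add: add.commute)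

lemma dist_diff_le: "dist (a - b) (a' - b') \<le> dist a a' + dist b (b' :: 'a)"
  using dist_add_le[of a "- b" a' "- b'"] dist_minus[of b b'] by simp

lemma compact_difference_set:
  assumes "compact (A :: 'a set)"
  shows "compact {a - b | a b. a \<in> A \<and> b \<in> A}"
proof -
  have "2-lipschitz_on (A \<times> A) (\<lambda>(a, b). a - b)"
  proof (rule lipschitz_onI)
    fix x y :: "'a \<times> 'a"
    show "dist ((\<lambda>(a, b). a - b) x) ((\<lambda>(a, b). a - b) y) \<le> 2 * dist x y"
      using dist_diff_le[of "fst x" "snd x" "fst y" "snd y"] dist_fst_le[of x y] dist_snd_le[of x y]
      by (simp add: case_prod_beta)
  qed simp
  then have "compact ((\<lambda>(a, b). a - b) ` (A \<times> A))"
    using assms by (intro compact_continuous_image lipschitz_on_continuous_on compact_Times)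
  also have "(\<lambda>(a, b). a - b) ` (A \<times> A) = {a - b | a b. a \<in> A \<and> b \<in> A}"
    by auto
  finally show ?thesis .
qed

lemma notin_spectre_stable:
  fixes A :: "'a set"
  assumes A: "A \<in> Kfam" and z: "z \<notin> spectre A"
  obtains \<rho> where "\<rho> > 0"
    "\<And>B w. B \<in> Kfam \<Longrightarrow> hausdorff_dist A B < \<rho> \<Longrightarrow> dist z w < \<rho> \<Longrightarrow> w \<notin> spectre B"
proof -
  have "closed A" "bounded A" "A \<noteq> {}"
    using A by (auto simp: Kfam_def compact_imp_closed compact_imp_bounded)
  obtain a where a: "a \<in> A" "a + z \<notin> A" "a - z \<notin> A" using z by (auto simp: spectre_def)
  define \<rho> where "\<rho> = min (infdist (a + z) A) (infdist (a - z) A) / 3"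
  have "\<rho> > 0"
    using a infdist_pos_not_in_closed[OF \<open>closed A\<close> \<open>A \<noteq> {}\<close>] by (simp add: \<rho>_def)
  moreover have "w \<notin> spectre B"
    if B: "B \<in> Kfam" "hausdorff_dist A B < \<rho>" and zw: "dist z w < \<rho>" for B w
  proof
    assume w: "w \<in> spectre B"
    have "bounded B" "B \<noteq> {}" using B by (auto simp: Kfam_def compact_imp_bounded)
    obtain b where b: "b \<in> B" "dist a b < \<rho>"
      using hausdorff_dist_lessE[OF \<open>bounded A\<close> \<open>B \<noteq> {}\<close> B(2) a(1)] .
    have "\<exists>x y. 3 * \<rho> \<le> infdist x A \<and> y \<in> B \<and> dist x y \<le> dist a b + dist z w"
    proof (cases "b + w \<in> B")
      case True
      then show ?thesis using dist_add_le[of a z b w] by (intro exI[of _ "a + z"] exI[of _ "b + w"]) (simp add: \<rho>_def)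
    next
      case False
      then have "b - w \<in> B" using w b(1) by (auto simp: spectre_def)
      then show ?thesis using dist_diff_le[of a z b w] by (intro exI[of _ "a - z"] exI[of _ "b - w"]) (simp add: \<rho>_def)
    qed
    then obtain x y where xy: "3 * \<rho> \<le> infdist x A" "y \<in> B" "dist x y \<le> dist a b + dist z w"
      by blast
    have "infdist y A \<le> hausdorff_dist A B"
      using infdist_le_hausdorff_dist[OF \<open>bounded B\<close> \<open>A \<noteq> {}\<close> xy(2)] by (simp add: hausdorff_dist_commute)
    moreover have "infdist x A \<le> infdist y A + dist x y" by (rule infdist_triangle)
    ultimately show False using xy B(2) b(2) zw by linarith
  qed
  ultimately show ?thesis using that by blast
qed

lemma spectre_near_differences:
  fixes A B :: "'a set"
  assumes A: "A \<in> Kfam" and B: "B \<in> Kfam" "hausdorff_dist A B < \<delta>" and w: "w \<in> spectre B"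
  shows "\<exists>k \<in> {a - a' | a a'. a \<in> A \<and> a' \<in> A}. dist w k < 2 * \<delta>"
proof -
  have "bounded B" "B \<noteq> {}" "A \<noteq> {}" using A B by (auto simp: Kfam_def compact_imp_bounded)
  then obtain b b' where bb': "b \<in> B" "b' \<in> B" "w = b - b'"
    using spectre_subset_differences w by blast
  have BA: "hausdorff_dist B A < \<delta>" using B(2) by (simp add: hausdorff_dist_commute)
  obtain a a' where "a \<in> A" "a' \<in> A" "dist b a < \<delta>" "dist b' a' < \<delta>"
    using hausdorff_dist_lessE[OF \<open>bounded B\<close> \<open>A \<noteq> {}\<close> BA] bb'(1,2) by metis
  then show ?thesis
    using dist_diff_le[of b b' a a'] bb'(3) by (intro bexI[of _ "a - a'"]) auto
qed

lemma compact_notin_spectre_stable: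
  fixes A K :: "'a set"
  assumes A: "A \<in> Kfam" and "compact K" and K: "K \<inter> spectre A = {}"
  obtains \<rho> where "\<rho> > 0"
    "\<And>z B w. z \<in> K \<Longrightarrow> B \<in> Kfam \<Longrightarrow> hausdorff_dist A B < \<rho> \<Longrightarrow> dist z w < \<rho> \<Longrightarrow> w \<notin> spectre B"
proof -
  have "\<forall>z\<in>K. \<exists>\<rho>>0. \<forall>B w. B \<in> Kfam \<longrightarrow> hausdorff_dist A B < \<rho> \<longrightarrow> dist z w < \<rho>
                   \<longrightarrow> w \<notin> spectre B"
  proof
    fix z assume "z \<in> K"
    then have "z \<notin> spectre A" using K by blast
    then obtain \<rho> where "\<rho> > 0"
      "\<And>B w. B \<in> Kfam \<Longrightarrow> hausdorff_dist A B < \<rho> \<Longrightarrow> dist z w < \<rho> \<Longrightarrow> w \<notin> spectre B"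
      using notin_spectre_stable[OF A] by blast
    then show "\<exists>\<rho>>0. \<forall>B w. B \<in> Kfam \<longrightarrow> hausdorff_dist A B < \<rho> \<longrightarrow> dist z w < \<rho>
                   \<longrightarrow> w \<notin> spectre B" by blast
  qed
  then obtain \<rho> where \<rho>: "\<And>z. z \<in> K \<Longrightarrow> \<rho> z > 0"
    and stable: "\<And>z B w. z \<in> K \<Longrightarrow> B \<in> Kfam \<Longrightarrow> hausdorff_dist A B < \<rho> z \<Longrightarrow> dist z w < \<rho> z
                   \<Longrightarrow> w \<notin> spectre B"
    by (metis bchoice)
  have "K \<subseteq> (\<Union>z\<in>K. ball z (\<rho> z / 2))" using \<rho> by force
  then obtain T where T: "T \<subseteq> K" "finite T" "K \<subseteq> (\<Union>t\<in>T. ball t (\<rho> t / 2))"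
    using compactE_image[OF \<open>compact K\<close>, of K "\<lambda>z. ball z (\<rho> z / 2)"] by auto
  define \<rho>\<^sub>0 where "\<rho>\<^sub>0 = Min (insert 1 (\<rho> ` T)) / 2"
  have "\<rho>\<^sub>0 > 0" using T \<rho> by (auto simp: \<rho>\<^sub>0_def)
  have \<rho>\<^sub>0_le: "\<rho>\<^sub>0 \<le> \<rho> t / 2" if "t \<in> T" for t
    using T(2) that by (simp add: \<rho>\<^sub>0_def)
  show ?thesis
  proof (rule that[OF \<open>\<rho>\<^sub>0 > 0\<close>])
    fix z B w
    assume z: "z \<in> K" and B: "B \<in> Kfam" "hausdorff_dist A B < \<rho>\<^sub>0" and zw: "dist z w < \<rho>\<^sub>0"
    obtain t where t: "t \<in> T" "dist t z < \<rho> t / 2" using T(3) z by auto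
    have "dist t w \<le> dist t z + dist z w" by (rule dist_triangle)
    then have "dist t w < \<rho> t" "hausdorff_dist A B < \<rho> t"
      using t(2) zw B(2) \<rho>\<^sub>0_le[OF t(1)] \<open>\<rho>\<^sub>0 > 0\<close> by linarith+
    then show "w \<notin> spectre B" using stable[of t B w] t(1) T(1) B(1) by blast
  qed
qed

lemma hausdorff_continuous_at_spectre_if_trivial:
  fixes A :: "'a set"
  assumes A: "A \<in> Kfam" and trivial: "spectre A = {0}"
  shows "hausdorff_continuous_at spectre A"
  unfolding hausdorff_continuous_at_def
proof (intro allI impI)
  fix \<epsilon> :: real assume "\<epsilon> > 0"
  define K where "K = {a - b | a b. a \<in> A \<and> b \<in> A} - ball 0 (\<epsilon>/4)"
  have "compact {a - b | a b. a \<in> A \<and> b \<in> A}"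
    using A by (simp add: Kfam_def compact_difference_set)
  then have "compact K" unfolding K_def by (rule compact_diff) simp
  moreover have "K \<inter> spectre A = {}" using trivial \<open>\<epsilon> > 0\<close> by (simp add: K_def)
  ultimately obtain \<rho> where "\<rho> > 0" and stable:
    "\<And>z B w. z \<in> K \<Longrightarrow> B \<in> Kfam \<Longrightarrow> hausdorff_dist A B < \<rho> \<Longrightarrow> dist z w < \<rho> \<Longrightarrow> w \<notin> spectre B"
    using compact_notin_spectre_stable[OF A] by blast
  define \<delta> where "\<delta> = min (\<epsilon>/8) (\<rho>/2)"
  have "\<delta> > 0" "\<delta> \<le> \<epsilon>/8" "\<delta> \<le> \<rho>/2" using \<open>\<epsilon> > 0\<close> \<open>\<rho> > 0\<close> by (simp_all add: \<delta>_def)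
  have "hausdorff_dist (spectre A) (spectre B) < \<epsilon>"
    if B: "B \<in> Kfam" "hausdorff_dist A B < \<delta>" for B
  proof -
    have small: "dist 0 w \<le> \<epsilon>/2" if w: "w \<in> spectre B" for w
    proof (rule ccontr)
      assume far: "\<not> dist 0 w \<le> \<epsilon>/2"
      obtain k where k: "k \<in> {a - b | a b. a \<in> A \<and> b \<in> A}" "dist w k < 2 * \<delta>"
        using spectre_near_differences[OF A B w] by blast
      have "dist 0 w \<le> dist 0 k + dist w k" by (rule dist_triangle2)
      then have "\<epsilon>/4 \<le> dist 0 k" using k(2) far \<open>\<delta> \<le> \<epsilon>/8\<close> by linarith
      then have "k \<in> K" using k(1) by (simp add: K_def)
      moreover have "dist k w < \<rho>" "hausdorff_dist A B < \<rho>"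
        using k(2) B(2) \<open>\<delta> \<le> \<rho>/2\<close> \<open>\<delta> > 0\<close> by (simp_all add: dist_commute)
      ultimately show False using stable B(1) w by blast
    qed
    have "rel_set (\<lambda>a b. dist a b \<le> \<epsilon>/2) {0} (spectre B)"
      using small \<open>\<epsilon> > 0\<close> by (auto simp: rel_set_def intro: exI[of _ 0])
    then have "hausdorff_dist {0} (spectre B) \<le> \<epsilon>/2"
      by (rule hausdorff_dist_le_rel_set) simp
    then show ?thesis using trivial \<open>\<epsilon> > 0\<close> by simp
  qed
  then show "\<exists>\<delta>>0. \<forall>B\<in>Kfam. hausdorff_dist A B < \<delta> \<longrightarrow> hausdorff_dist (spectre A) (spectre B) < \<epsilon>"
    using \<open>\<delta> > 0\<close> by blast
qed

lemma spectre_trivial_if_hausdorff_continuous_at: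
  fixes A :: "'a set"
  assumes balls_infinite: "\<And>(x :: 'a) r. r > 0 \<Longrightarrow> infinite (ball x r)"
    and A: "A \<in> Kfam" and cont: "hausdorff_continuous_at spectre A"
  shows "spectre A = {0}"
proof (rule ccontr)
  assume "spectre A \<noteq> {0}"
  then obtain z where z: "z \<in> spectre A" "z \<noteq> 0" using zero_in_spectre by blast
  then have "dist z 0 > 0" by simp
  then obtain \<delta> where "\<delta> > 0"
    and \<delta>: "\<And>B. B \<in> Kfam \<Longrightarrow> hausdorff_dist A B < \<delta> \<Longrightarrow> hausdorff_dist (spectre A) (spectre B) < dist z 0"
    using cont unfolding hausdorff_continuous_at_def by blast
  obtain B where "B \<in> Kfam" "weak_sidon B" "4 \<le> card B" "hausdorff_dist A B < \<delta>"
    using weak_sidon_approximation[OF balls_infinite A \<open>\<delta> > 0\<close>] .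
  then have "hausdorff_dist (spectre A) {0} < dist z 0"
    using \<delta> spectre_weak_sidon by metis
  moreover have "bounded (spectre A)"
    using A spectre_subset_differences[of A] compact_difference_set[of A]
    by (auto simp: Kfam_def intro: bounded_subset compact_imp_bounded)
  then have "dist z 0 \<le> hausdorff_dist (spectre A) {0}"
    using infdist_le_hausdorff_dist[of "spectre A" "{0}" z] z(1) by simp
  ultimately show False by simp
qed

end

theorem theorem3p10:
  fixes A :: "'a::{metric_space, ab_group_add} set"
  assumes transl_inv: "\<And>x y z :: 'a. dist x y = dist (x + z) (y + z)"
    and complete: "complete (UNIV :: 'a set)"
    and loc_compact: "locally compact (UNIV :: 'a set)"
    and balls_infinite: "\<And>(x :: 'a) r. r > 0 \<Longrightarrow> infinite (ball x r)"
    and A: "A \<in> Kfam"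
  shows "(\<forall>\<epsilon>>0. \<exists>\<delta>>0. \<forall>B\<in>Kfam. hausdorff_dist A B < \<delta> \<longrightarrow>
            hausdorff_dist (spectre A) (spectre B) < \<epsilon>)
         \<longleftrightarrow> spectre A = {0}"
proof -
  interpret translation_invariant_dist
    using transl_inv by unfold_locales
  show ?thesis
    using spectre_trivial_if_hausdorff_continuous_at[OF balls_infinite A]
      hausdorff_continuous_at_spectre_if_trivial[OF A]
    unfolding hausdorff_continuous_at_def by blast
qed

end
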